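(* (Explicit Rayleigh's Cutting Law.) Let $\Gamma$ be a metrized graph and let $e_i$ be an edge of $\Gamma$ with end points $p_i,q_i$ and length $L_i$. If $e_i$ is not a bridge of $\Gamma$, then for any $s,t\in\Gamma-e_i$, $$r(s,t)=r_{\Gamma-e_i}(s,t)-\frac{1}{L_i+R_i}\big(j^{\Gamma-e_i}_{p_i}(q_i,s)-j^{\Gamma-e_i}_{p_i}(q_i,t)\big)^2=r_{\Gamma-e_i}(s,t)-\frac{L_i+R_i}{L_i^2}\big(j_{p_i}(q_i,s)-j_{p_i}(q_i,t)\big)^2.$$ In particular $r_{\Gamma-e_i}(s,t)\ge r(s,t)$, and equality holds if and only if $j_{p_i}(q_i,s)=j_{p_i}(q_i,t)$.
   Context: A metrized graph $\Gamma$ is a finite connected graph (multiple edges and self-loops allowed) in which each edge is identified with a closed line segment of positive length. $\Gamma$ is regarded as a resistive electric circuit in which each edge is a resistor whose resistance equals its length. $r(x,y)$ is the effective resistance between $x$ and $y$; $j_z(x,y)$ is the voltage at $x$ when a unit current enters at $y$ and exits at $z$, with reference voltage $0$ at $z$. $\Gamma-e_i$ denotes the metrized graph obtained from $\Gamma$ by deleting the interior of the edge $e_i$; $e_i$ is a bridge if $\Gamma-e_i$ is disconnected. When $e_i$ is not a bridge, $R_i:=r_{\Gamma-e_i}(p_i,q_i)$. Subscripts/superscripts $\Gamma-e_i$ indicate resistance and voltage functions on $\Gamma-e_i$. *)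

theory Defs
  imports Complex_Main
begin

text \<open>A metrized graph: finite vertex set, finite edge set, each edge with two
  end points (possibly equal: self-loop) and a positive length.  Multiple edges allowed.\<close>

record ('v, 'e) mgraph =
  verts :: "'v set"
  edges :: "'e set"
  ends  :: "'e \<Rightarrow> 'v \<times> 'v"
  len   :: "'e \<Rightarrow> real"

text \<open>Points of a metrized graph: a vertex, or an interior point of an edge e at
  distance t (0 < t < length) from the first end point of e.\<close>

datatype ('v, 'e) point = Vert 'v | Inner 'e real

definition edge_pt :: "('v, 'e, 'z) mgraph_scheme \<Rightarrow> 'e \<Rightarrow> real \<Rightarrow> ('v, 'e) point" where
  "edge_pt G e t =
     (if t \<le> 0 then Vert (fst (ends G e))
      else if len G e \<le> t then Vert (snd (ends G e))
      else Inner e t)"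

definition pts :: "('v, 'e, 'z) mgraph_scheme \<Rightarrow> ('v, 'e) point set" where
  "pts G = Vert ` verts G \<union> {Inner e t | e t. e \<in> edges G \<and> 0 < t \<and> t < len G e}"

definition adj :: "('v, 'e, 'z) mgraph_scheme \<Rightarrow> ('v \<times> 'v) set" where
  "adj G = {ends G e | e. e \<in> edges G} \<union> {prod.swap (ends G e) | e. e \<in> edges G}"

definition connected_mg :: "('v, 'e, 'z) mgraph_scheme \<Rightarrow> bool" where
  "connected_mg G \<longleftrightarrow> (\<forall>u\<in>verts G. \<forall>v\<in>verts G. (u, v) \<in> (adj G)\<^sup>*)"

definition metrized_graph :: "('v, 'e, 'z) mgraph_scheme \<Rightarrow> bool" where
  "metrized_graph G \<longleftrightarrow>
     finite (verts G) \<and> verts G \<noteq> {} \<and> finite (edges G) \<and>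
     (\<forall>e\<in>edges G. fst (ends G e) \<in> verts G \<and> snd (ends G e) \<in> verts G \<and> 0 < len G e) \<and>
     connected_mg G"

definition delete_edge :: "('v, 'e, 'z) mgraph_scheme \<Rightarrow> 'e \<Rightarrow> ('v, 'e, 'z) mgraph_scheme" where
  "delete_edge G e = G\<lparr>edges := edges G - {e}\<rparr>"

definition is_bridge :: "('v, 'e, 'z) mgraph_scheme \<Rightarrow> 'e \<Rightarrow> bool" where
  "is_bridge G e \<longleftrightarrow> e \<in> edges G \<and> \<not> connected_mg (delete_edge G e)"

text \<open>f is affine along every edge on every closed parameter interval containing no
  point of B in its interior (so piecewise linear with break points only at B and vertices).\<close>

definition pl_adapted :: "('v, 'e, 'z) mgraph_scheme \<Rightarrow> ('v, 'e) point set \<Rightarrow> (('v, 'e) point \<Rightarrow> real) \<Rightarrow> bool" where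
  "pl_adapted G B f \<longleftrightarrow>
     (\<forall>e\<in>edges G. \<forall>a b. 0 \<le> a \<and> a < b \<and> b \<le> len G e \<and>
        (\<forall>t. a < t \<and> t < b \<longrightarrow> edge_pt G e t \<notin> B) \<longrightarrow>
        (\<exists>\<alpha> \<beta>. \<forall>t\<in>{a..b}. f (edge_pt G e t) = \<alpha> + \<beta> * t))"

definition right_slope :: "(real \<Rightarrow> real) \<Rightarrow> real \<Rightarrow> real" where
  "right_slope g t = (THE d. (g has_real_derivative d) (at_right t))"

definition left_slope :: "(real \<Rightarrow> real) \<Rightarrow> real \<Rightarrow> real" where
  "left_slope g t = (THE d. (g has_real_derivative d) (at_left t))"

text \<open>Sum of the outgoing directional derivatives of f at the point p
  (= minus the net current flowing out of p into the edges, resistance = length).\<close>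

definition flux :: "('v, 'e, 'z) mgraph_scheme \<Rightarrow> (('v, 'e) point \<Rightarrow> real) \<Rightarrow> ('v, 'e) point \<Rightarrow> real" where
  "flux G f p =
     (\<Sum>e\<in>edges G. \<Sum>t\<in>{t\<in>{0..len G e}. edge_pt G e t = p}.
        (if t < len G e then right_slope (\<lambda>u. f (edge_pt G e u)) t else 0)
      - (if 0 < t then left_slope (\<lambda>u. f (edge_pt G e u)) t else 0))"

text \<open>f is the voltage when unit current enters at y and exits at z, with f z = 0
  (continuous, piecewise linear, Kirchhoff's current law everywhere).\<close>

definition voltage_sol :: "('v, 'e, 'z) mgraph_scheme \<Rightarrow> ('v, 'e) point \<Rightarrow> ('v, 'e) point \<Rightarrow> (('v, 'e) point \<Rightarrow> real) \<Rightarrow> bool" where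
  "voltage_sol G y z f \<longleftrightarrow>
     pl_adapted G {y, z} f \<and>
     (\<forall>p\<in>pts G. flux G f p = (if p = z then 1 else 0) - (if p = y then 1 else 0)) \<and>
     f z = 0 \<and> (\<forall>p. p \<notin> pts G \<longrightarrow> f p = 0)"

text \<open>jv G z x y = j_z(x,y): voltage at x, unit current enters at y, exits at z, voltage 0 at z.\<close>

definition jv :: "('v, 'e, 'z) mgraph_scheme \<Rightarrow> ('v, 'e) point \<Rightarrow> ('v, 'e) point \<Rightarrow> ('v, 'e) point \<Rightarrow> real" where
  "jv G z x y = (THE f. voltage_sol G y z f) x"

definition res :: "('v, 'e, 'z) mgraph_scheme \<Rightarrow> ('v, 'e) point \<Rightarrow> ('v, 'e) point \<Rightarrow> real" where
  "res G x y = jv G y x x"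

end

(*
  Everything is reduced to finite linear algebra on a subdivision of the graph in which the
  points under consideration are nodes.  A potential that is affine between consecutive nodes
  satisfies Kirchhoff's law exactly when its discrete Laplacian (the sum of outgoing slopes at
  each node) is the prescribed dipole.  Green's identity, sum of w * lap f = - energy (f, w),
  gives uniqueness on a connected graph (hence existence, injective square systems being
  surjective), the reciprocity j_z(x, y) = j_z(y, x), and r >= 0.

  Cutting e = pq changes the Laplacian at p and q only by the slope (f q - f p) / L along e.  Let g be
  the potential of G - e driven from s to t and h that driven from q to p, so h q = R.  Then
  g + I (h - h t) is the potential of G driven from s to t as soon as the current I through e
  balances, which forces I = (g p - g q) / (L + R) = (h t - h s) / (L + R) by reciprocity;
  evaluating at s gives r(s, t) = r'(s, t) - (h s - h t)^2 / (L + R).  In the same way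
  L / (L + R) * h is the potential of G driven from q to p, which turns the first formula
  into the second.
*)
theory Submission
  imports Defs "Jordan_Normal_Form.Determinant"
begin

section \<open>Square linear systems\<close>

lemma mult_mat_vec_surj_if_inj:
  fixes M :: "'a :: field mat"
  assumes M: "M \<in> carrier_mat k k"
    and inj: "\<And>x. x \<in> carrier_vec k \<Longrightarrow> M *\<^sub>v x = 0\<^sub>v k \<Longrightarrow> x = 0\<^sub>v k"
    and b: "b \<in> carrier_vec k"
  shows "\<exists>x \<in> carrier_vec k. M *\<^sub>v x = b"
proof -
  have "det M \<noteq> 0" using det_0_iff_vec_prod_zero[OF M] inj by blast
  from det_non_zero_imp_unit[OF M this, of undefined]
  obtain B where B: "B \<in> carrier_mat k k" "M * B = 1\<^sub>m k"
    unfolding Units_def ring_mat_def by auto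
  show ?thesis
  proof (intro bexI)
    show "M *\<^sub>v (B *\<^sub>v b) = b" using B M b
      by (metis assoc_mult_mat_vec one_mult_mat_vec)
    show "B *\<^sub>v b \<in> carrier_vec k" using B b by auto
  qed
qed

lemma linear_system_solvable_if_inj:
  fixes A :: "'p \<Rightarrow> 'p \<Rightarrow> 'a :: field"
  assumes fin: "finite N"
    and inj: "\<And>v. \<forall>n\<in>N. (\<Sum>m\<in>N. A n m * v m) = 0 \<Longrightarrow> \<forall>m\<in>N. v m = 0"
  shows "\<exists>v. \<forall>n\<in>N. (\<Sum>m\<in>N. A n m * v m) = b n"
proof -
  define k where "k = card N"
  obtain h where h: "bij_betw h {0..<k} N" using ex_bij_betw_nat_finite[OF fin] k_def by blast
  define g where "g = inv_into {0..<k} h"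
  have gh: "\<And>j. j < k \<Longrightarrow> g (h j) = j" unfolding g_def using h
    by (simp add: bij_betw_def inv_into_f_f)
  have hg: "\<And>m. m \<in> N \<Longrightarrow> h (g m) = m \<and> g m < k" unfolding g_def using h
    by (metis atLeastLessThan_iff bij_betw_def bij_betw_inv_into_right inv_into_into)
  define M where "M = mat k k (\<lambda>(i,j). A (h i) (h j))"
  have M: "M \<in> carrier_mat k k" unfolding M_def by simp
  have M_entry: "(M *\<^sub>v x) $ i = (\<Sum>m\<in>N. A (h i) m * x $ (g m))" if "i < k" "x \<in> carrier_vec k" for x i
  proof -
    have "(M *\<^sub>v x) $ i = (\<Sum>j\<in>{0..<k}. A (h i) (h j) * x $ j)"
      using that unfolding M_def by (simp add: mult_mat_vec_def scalar_prod_def)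
    also have "\<dots> = (\<Sum>j\<in>{0..<k}. A (h i) (h j) * x $ (g (h j)))"
      by (intro sum.cong) (auto simp: gh)
    also have "\<dots> = (\<Sum>m\<in>N. A (h i) m * x $ (g m))"
      using sum.reindex_bij_betw[OF h, of "\<lambda>m. A (h i) m * x $ (g m)"] by simp
    finally show ?thesis .
  qed
  have "\<exists>x \<in> carrier_vec k. M *\<^sub>v x = vec k (\<lambda>i. b (h i))"
  proof (rule mult_mat_vec_surj_if_inj[OF M])
    fix x :: "'a vec" assume x: "x \<in> carrier_vec k" and Mx: "M *\<^sub>v x = 0\<^sub>v k"
    have "\<forall>n\<in>N. (\<Sum>m\<in>N. A n m * x $ (g m)) = 0"
    proof
      fix n assume "n \<in> N"
      then have "(M *\<^sub>v x) $ (g n) = 0" using Mx hg by simp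
      then show "(\<Sum>m\<in>N. A n m * x $ (g m)) = 0" using M_entry[OF _ x, of "g n"] hg \<open>n \<in> N\<close> by simp
    qed
    from inj[OF this] have "\<forall>m\<in>N. x $ (g m) = 0" .
    then have "\<forall>j<k. x $ j = 0" using h gh unfolding bij_betw_def
      by (metis atLeastLessThan_iff image_eqI lessThan_atLeast0 lessThan_iff)
    then show "x = 0\<^sub>v k" using x by (intro eq_vecI) auto
  qed simp
  then obtain x where x: "x \<in> carrier_vec k" "M *\<^sub>v x = vec k (\<lambda>i. b (h i))" by blast
  show ?thesis
  proof (intro exI ballI)
    fix n assume "n \<in> N"
    have "(M *\<^sub>v x) $ (g n) = b n" using x hg[OF \<open>n \<in> N\<close>] by simp
    then show "(\<Sum>m\<in>N. A n m * x $ (g m)) = b n" using M_entry[OF _ x(1), of "g n"] hg[OF \<open>n \<in> N\<close>] by simp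
  qed
qed

section \<open>Partitions of an interval\<close>

definition succ_in :: "real set \<Rightarrow> real \<Rightarrow> real" where
  "succ_in S a = Min {c\<in>S. a < c}"

definition seg_start :: "real set \<Rightarrow> real \<Rightarrow> real \<Rightarrow> real" where
  "seg_start S L u = Max {c\<in>S. c \<le> u \<and> c < L}"

locale interval_partition =
  fixes S :: "real set" and L :: real
  assumes finite: "finite S" and left_mem: "0 \<in> S" and right_mem: "L \<in> S" and pos: "0 < L"
    and subset: "S \<subseteq> {0..L}"
begin

lemma succ_in_mem: "a < L \<Longrightarrow> succ_in S a \<in> S"
  and succ_in_gt: "a < L \<Longrightarrow> a < succ_in S a"
  and succ_in_least: "a < L \<Longrightarrow> c \<in> S \<Longrightarrow> a < c \<Longrightarrow> succ_in S a \<le> c"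
proof -
  assume "a < L"
  then have ne: "{c\<in>S. a < c} \<noteq> {}" using right_mem by auto
  have fin: "finite {c\<in>S. a < c}" using finite by auto
  show "succ_in S a \<in> S" "a < succ_in S a" using Min_in[OF fin ne] unfolding succ_in_def by auto
  show "c \<in> S \<Longrightarrow> a < c \<Longrightarrow> succ_in S a \<le> c" unfolding succ_in_def using fin by auto
qed

lemma succ_in_le_right: "a < L \<Longrightarrow> succ_in S a \<le> L"
  using succ_in_mem subset by force

lemma inj_on_succ_in: "inj_on (succ_in S) {a\<in>S. a < L}"
proof (rule inj_onI)
  fix a b assume a: "a \<in> {a\<in>S. a < L}" and b: "b \<in> {a\<in>S. a < L}" and eq: "succ_in S a = succ_in S b"
  have "\<not> a < b" using succ_in_least[of a b] succ_in_gt[of b] a b eq by force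
  moreover have "\<not> b < a" using succ_in_least[of b a] succ_in_gt[of a] a b eq by force
  ultimately show "a = b" by simp
qed

lemma succ_in_onto:
  assumes "b \<in> S" "0 < b"
  obtains a where "a \<in> S" "a < L" "succ_in S a = b"
proof -
  define a where "a = Max {c\<in>S. c < b}"
  have ne: "{c\<in>S. c < b} \<noteq> {}" using assms left_mem by auto
  have fin: "finite {c\<in>S. c < b}" using finite by auto
  have a: "a \<in> S" "a < b" using Max_in[OF fin ne] unfolding a_def by auto
  have a_max: "\<And>c. c \<in> S \<Longrightarrow> c < b \<Longrightarrow> c \<le> a" unfolding a_def using fin by auto
  have aL: "a < L" using a assms subset by force
  have "succ_in S a \<le> b" using succ_in_least[OF aL] a assms by auto
  moreover have "\<not> succ_in S a < b" using a_max succ_in_mem[OF aL] succ_in_gt[OF aL] by force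
  ultimately show ?thesis using that a aL by simp
qed

lemma succ_in_induct:
  assumes "b \<in> S" and P0: "P 0" and step: "\<And>a. a \<in> S \<Longrightarrow> a < L \<Longrightarrow> P a \<Longrightarrow> P (succ_in S a)"
  shows "P b"
  using assms(1)
proof (induction "card {c\<in>S. c < b}" arbitrary: b rule: less_induct)
  case less
  show ?case
  proof (cases "b = 0")
    case True then show ?thesis using P0 by simp
  next
    case False
    then have "0 < b" using less subset by force
    then obtain a where a: "a \<in> S" "a < L" "succ_in S a = b" using succ_in_onto less.prems by blast
    have "a < b" using succ_in_gt a by auto
    then have "{c\<in>S. c < a} \<subset> {c\<in>S. c < b}" using a by auto
    then have "card {c\<in>S. c < a} < card {c\<in>S. c < b}" using finite by (intro psubset_card_mono) auto
    then have "P a" using less a by blast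
    then show ?thesis using step a by blast
  qed
qed

lemma seg_start_mem: "0 \<le> u \<Longrightarrow> seg_start S L u \<in> S"
  and seg_start_less: "0 \<le> u \<Longrightarrow> seg_start S L u < L"
  and seg_start_le: "0 \<le> u \<Longrightarrow> seg_start S L u \<le> u"
  and seg_start_max: "c \<in> S \<Longrightarrow> c \<le> u \<Longrightarrow> c < L \<Longrightarrow> c \<le> seg_start S L u"
proof -
  have fin: "finite {c\<in>S. c \<le> u \<and> c < L}" using finite by auto
  show "c \<in> S \<Longrightarrow> c \<le> u \<Longrightarrow> c < L \<Longrightarrow> c \<le> seg_start S L u"
    unfolding seg_start_def using fin by auto
  assume "0 \<le> u"
  then have ne: "{c\<in>S. c \<le> u \<and> c < L} \<noteq> {}" using left_mem pos by auto
  show "seg_start S L u \<in> S" "seg_start S L u < L" "seg_start S L u \<le> u"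
    using Max_in[OF fin ne] unfolding seg_start_def by auto
qed

lemma le_succ_in_seg_start:
  assumes "0 \<le> u" "u \<le> L"
  shows "u \<le> succ_in S (seg_start S L u)"
proof (rule ccontr)
  let ?a = "seg_start S L u"
  assume "\<not> ?thesis"
  then have "succ_in S ?a \<le> ?a"
    using seg_start_max[of "succ_in S ?a" u] succ_in_mem succ_in_le_right seg_start_less assms by force
  then show False using succ_in_gt seg_start_less assms by force
qed

lemma seg_start_eq:
  assumes "a \<in> S" "a < L" "a \<le> u" "u < succ_in S a"
  shows "seg_start S L u = a"
proof -
  have "0 \<le> u" using assms subset by force
  then have "seg_start S L u \<in> S" "seg_start S L u \<le> u" by (simp_all add: seg_start_mem seg_start_le)
  then have "\<not> a < seg_start S L u" using succ_in_least[OF assms(2)] assms(4) by force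
  moreover have "a \<le> seg_start S L u" using seg_start_max assms by simp
  ultimately show ?thesis by simp
qed

end

section \<open>Subdivisions and the discrete Laplacian\<close>

definition interior_pts :: "('v,'e,'z) mgraph_scheme \<Rightarrow> ('v,'e) point set" where
  "interior_pts G = {Inner e u | e u. e \<in> edges G \<and> 0 < u \<and> u < len G e}"

definition subdivision :: "('v,'e,'z) mgraph_scheme \<Rightarrow> ('v,'e) point set \<Rightarrow> bool" where
  "subdivision G X \<longleftrightarrow> metrized_graph G \<and> finite X \<and> X \<subseteq> interior_pts G"

definition nodes :: "('v,'e,'z) mgraph_scheme \<Rightarrow> ('v,'e) point set \<Rightarrow> ('v,'e) point set" where
  "nodes G X = Vert ` verts G \<union> X"

definition breaks :: "('v,'e,'z) mgraph_scheme \<Rightarrow> ('v,'e) point set \<Rightarrow> 'e \<Rightarrow> real set" where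
  "breaks G X e = insert 0 (insert (len G e) {u. Inner e u \<in> X})"

definition seg_starts :: "('v,'e,'z) mgraph_scheme \<Rightarrow> ('v,'e) point set \<Rightarrow> 'e \<Rightarrow> real set" where
  "seg_starts G X e = {a\<in>breaks G X e. a < len G e}"

definition seg_end :: "('v,'e,'z) mgraph_scheme \<Rightarrow> ('v,'e) point set \<Rightarrow> 'e \<Rightarrow> real \<Rightarrow> real" where
  "seg_end G X e a = succ_in (breaks G X e) a"

definition slope :: "('v,'e,'z) mgraph_scheme \<Rightarrow> ('v,'e) point set \<Rightarrow> (('v,'e) point \<Rightarrow> real) \<Rightarrow> 'e \<Rightarrow> real \<Rightarrow> real" where
  "slope G X f e a = (f (edge_pt G e (seg_end G X e a)) - f (edge_pt G e a)) / (seg_end G X e a - a)"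

text \<open>The sum of the outgoing slopes at \<open>n\<close> of \<open>f\<close> interpolated linearly between consecutive nodes:
  the discrete form of \<^const>\<open>flux\<close>.\<close>

definition lap :: "('v,'e,'z) mgraph_scheme \<Rightarrow> ('v,'e) point set \<Rightarrow> (('v,'e) point \<Rightarrow> real) \<Rightarrow> ('v,'e) point \<Rightarrow> real" where
  "lap G X f n = (\<Sum>e\<in>edges G. \<Sum>a\<in>seg_starts G X e.
      (of_bool (edge_pt G e a = n) - of_bool (edge_pt G e (seg_end G X e a) = n)) * slope G X f e a)"

definition energy :: "('v,'e,'z) mgraph_scheme \<Rightarrow> ('v,'e) point set \<Rightarrow> (('v,'e) point \<Rightarrow> real) \<Rightarrow> (('v,'e) point \<Rightarrow> real) \<Rightarrow> real" where
  "energy G X f w = (\<Sum>e\<in>edges G. \<Sum>a\<in>seg_starts G X e.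
      (f (edge_pt G e (seg_end G X e a)) - f (edge_pt G e a)) * (w (edge_pt G e (seg_end G X e a)) - w (edge_pt G e a))
      / (seg_end G X e a - a))"

lemma subdivisionD:
  assumes "subdivision G X"
  shows "finite (edges G)" "finite (nodes G X)" "X \<subseteq> interior_pts G" "connected_mg G"
    "\<And>e. e \<in> edges G \<Longrightarrow> fst (ends G e) \<in> verts G \<and> snd (ends G e) \<in> verts G \<and> 0 < len G e"
  using assms unfolding subdivision_def metrized_graph_def nodes_def by auto

lemma edge_pt_left: "0 < len G e \<Longrightarrow> edge_pt G e 0 = Vert (fst (ends G e))"
  and edge_pt_right: "0 < len G e \<Longrightarrow> edge_pt G e (len G e) = Vert (snd (ends G e))"
  and edge_pt_inner: "0 < u \<Longrightarrow> u < len G e \<Longrightarrow> edge_pt G e u = Inner e u"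
  unfolding edge_pt_def by auto

lemma edge_pt_cases:
  assumes "0 \<le> t" "t \<le> len G e" "0 < len G e"
  obtains "t = 0" "edge_pt G e t = Vert (fst (ends G e))"
  | "t = len G e" "edge_pt G e t = Vert (snd (ends G e))"
  | "0 < t" "t < len G e" "edge_pt G e t = Inner e t"
proof -
  consider "t = 0" | "t = len G e" | "0 < t" "t < len G e" using assms by linarith
  then show ?thesis by cases (auto intro: that simp: assms edge_pt_left edge_pt_right edge_pt_inner)
qed

lemma pts_cases:
  assumes "p \<in> pts G"
  obtains w where "p = Vert w" "w \<in> verts G"
  | e u where "p = Inner e u" "e \<in> edges G" "0 < u" "u < len G e"
  using assms unfolding pts_def by auto

lemma nodes_subset_pts: "subdivision G X \<Longrightarrow> nodes G X \<subseteq> pts G"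
  unfolding subdivision_def nodes_def pts_def interior_pts_def by auto

lemma interior_node_in_subdivision: "p \<in> nodes G X \<Longrightarrow> p \<in> interior_pts G \<Longrightarrow> p \<in> X"
  unfolding nodes_def interior_pts_def by auto

lemma subdivision_through:
  assumes "metrized_graph G" "finite Y" "Y \<subseteq> pts G"
  shows "subdivision G (Y \<inter> interior_pts G)" "Y \<subseteq> nodes G (Y \<inter> interior_pts G)"
proof -
  show "subdivision G (Y \<inter> interior_pts G)" using assms unfolding subdivision_def by auto
  show "Y \<subseteq> nodes G (Y \<inter> interior_pts G)"
  proof
    fix p assume "p \<in> Y"
    then have "p \<in> pts G" using assms(3) by blast
    then show "p \<in> nodes G (Y \<inter> interior_pts G)"
      by (cases rule: pts_cases) (use \<open>p \<in> Y\<close> in \<open>auto simp: nodes_def interior_pts_def\<close>)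
  qed
qed

lemma breaks_partition:
  assumes "subdivision G X" "e \<in> edges G"
  shows "interval_partition (breaks G X e) (len G e)"
proof
  have "finite (Inner e -` X)" using assms unfolding subdivision_def by (intro finite_vimageI) (auto simp: inj_def)
  moreover have "{u. Inner e u \<in> X} = Inner e -` X" by auto
  ultimately show "finite (breaks G X e)" unfolding breaks_def by simp
  show "0 \<in> breaks G X e" "len G e \<in> breaks G X e" unfolding breaks_def by auto
  show L: "0 < len G e" using subdivisionD(5)[OF assms] by simp
  have "0 < u \<and> u < len G e" if "Inner e u \<in> X" for u
    using that subdivisionD(3)[OF assms(1)] unfolding interior_pts_def by auto
  then show "breaks G X e \<subseteq> {0..len G e}" using L unfolding breaks_def by fastforce
qed

lemma edge_pt_break_node:
  assumes "subdivision G X" "e \<in> edges G" "a \<in> breaks G X e"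
  shows "edge_pt G e a \<in> nodes G X"
proof -
  have "a = 0 \<or> a = len G e \<or> (Inner e a \<in> X \<and> 0 < a \<and> a < len G e)"
    using assms(3) subdivisionD(3)[OF assms(1)] unfolding breaks_def interior_pts_def by auto
  then show ?thesis
    using subdivisionD(5)[OF assms(1,2)] by (auto simp: nodes_def edge_pt_left edge_pt_right edge_pt_inner)
qed

lemma seg_starts_finite:
  assumes "subdivision G X" "e \<in> edges G"
  shows "finite (seg_starts G X e)"
  using interval_partition.finite[OF breaks_partition[OF assms]] unfolding seg_starts_def by simp

lemma seg_startsD:
  assumes "subdivision G X" "e \<in> edges G" "a \<in> seg_starts G X e"
  shows "a \<in> breaks G X e" "0 \<le> a" "a < len G e" "seg_end G X e a \<in> breaks G X e"
    "a < seg_end G X e a" "seg_end G X e a \<le> len G e"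
    "\<And>c. c \<in> breaks G X e \<Longrightarrow> a < c \<Longrightarrow> seg_end G X e a \<le> c"
proof -
  interpret interval_partition "breaks G X e" "len G e" by (rule breaks_partition[OF assms(1,2)])
  have a: "a \<in> breaks G X e" "a < len G e" using assms(3) unfolding seg_starts_def by auto
  then show "a \<in> breaks G X e" "0 \<le> a" "a < len G e" using subset by auto
  show "seg_end G X e a \<in> breaks G X e" "a < seg_end G X e a" "seg_end G X e a \<le> len G e"
    "\<And>c. c \<in> breaks G X e \<Longrightarrow> a < c \<Longrightarrow> seg_end G X e a \<le> c"
    unfolding seg_end_def using succ_in_mem succ_in_gt succ_in_le_right succ_in_least a(2) by auto
qed

lemma seg_ends_nodes:
  assumes "subdivision G X" "e \<in> edges G" "a \<in> seg_starts G X e"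
  shows "edge_pt G e a \<in> nodes G X" "edge_pt G e (seg_end G X e a) \<in> nodes G X"
  using edge_pt_break_node[OF assms(1,2)] seg_startsD[OF assms] by auto

lemma sum_mult_of_bool_point:
  assumes "finite N" "a \<in> N"
  shows "(\<Sum>n\<in>N. w n * of_bool (a = n)) = (w a :: 'a :: semiring_1)"
  using assms by (simp add: of_bool_def if_distrib[of "(*) _"] sum.delta cong: if_cong)

lemma slope_cong:
  assumes "subdivision G X" "e \<in> edges G" "a \<in> seg_starts G X e"
    and "\<And>n. n \<in> nodes G X \<Longrightarrow> f n = g n"
  shows "slope G X f e a = slope G X g e a"
  unfolding slope_def using assms(4) seg_ends_nodes[OF assms(1-3)] by simp

lemma green:
  assumes "subdivision G X"
  shows "(\<Sum>n\<in>nodes G X. w n * lap G X f n) = - energy G X f w"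
proof -
  let ?N = "nodes G X"
  let ?p = "\<lambda>e a. edge_pt G e a" and ?q = "\<lambda>e a. edge_pt G e (seg_end G X e a)"
  have "(\<Sum>n\<in>?N. w n * lap G X f n) = (\<Sum>e\<in>edges G. \<Sum>a\<in>seg_starts G X e. \<Sum>n\<in>?N.
      w n * ((of_bool (?p e a = n) - of_bool (?q e a = n)) * slope G X f e a))"
    unfolding lap_def sum_distrib_left
    by (subst sum.swap) (intro sum.cong refl, rule sum.swap)
  also have "\<dots> = (\<Sum>e\<in>edges G. \<Sum>a\<in>seg_starts G X e. - ((f (?q e a) - f (?p e a)) * (w (?q e a) - w (?p e a))
      / (seg_end G X e a - a)))"
  proof (intro sum.cong refl)
    fix e a assume e: "e \<in> edges G" and a: "a \<in> seg_starts G X e"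
    note ends = seg_ends_nodes[OF assms e a]
    have fin: "finite ?N" using subdivisionD(2)[OF assms] .
    have "(\<Sum>n\<in>?N. w n * ((of_bool (?p e a = n) - of_bool (?q e a = n)) * slope G X f e a))
       = ((\<Sum>n\<in>?N. w n * of_bool (?p e a = n)) - (\<Sum>n\<in>?N. w n * of_bool (?q e a = n))) * slope G X f e a"
      by (simp add: sum_subtractf[symmetric] sum_distrib_right left_diff_distrib right_diff_distrib mult.assoc
          del: sum_mult_of_bool_eq)
    also have "\<dots> = (w (?p e a) - w (?q e a)) * slope G X f e a"
      using sum_mult_of_bool_point[OF fin ends(1), of w] sum_mult_of_bool_point[OF fin ends(2), of w] by simp
    also have "\<dots> = - ((f (?q e a) - f (?p e a)) * (w (?q e a) - w (?p e a)) / (seg_end G X e a - a))"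
      unfolding slope_def by (simp add: algebra_simps minus_divide_left)
    finally show "(\<Sum>n\<in>?N. w n * ((of_bool (?p e a = n) - of_bool (?q e a = n)) * slope G X f e a))
      = - ((f (?q e a) - f (?p e a)) * (w (?q e a) - w (?p e a)) / (seg_end G X e a - a))" .
  qed
  also have "\<dots> = - energy G X f w" unfolding energy_def by (simp add: sum_negf)
  finally show ?thesis .
qed

lemma energy_sym: "energy G X f w = energy G X w f"
  unfolding energy_def by (simp add: mult.commute)

lemma energy_nonneg:
  assumes "subdivision G X" shows "0 \<le> energy G X f f"
  unfolding energy_def
  by (intro sum_nonneg divide_nonneg_pos) (simp_all add: seg_startsD(5)[OF assms])

lemma lap_linear: "lap G X (\<lambda>x. a * f x + b * g x + c) n = a * lap G X f n + b * lap G X g n"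
proof -
  have slope_linear:
    "slope G X (\<lambda>x. a * f x + b * g x + c) e u = a * slope G X f e u + b * slope G X g e u" for e u
    unfolding slope_def by (simp add: algebra_simps add_divide_distrib diff_divide_distrib)
  show ?thesis
    unfolding lap_def slope_linear distrib_left sum.distrib sum_distrib_left by (simp add: mult.left_commute)
qed

lemma lap_sum:
  assumes "finite M"
  shows "lap G X (\<lambda>x. \<Sum>m\<in>M. c m * g m x) n = (\<Sum>m\<in>M. c m * lap G X (g m) n)"
proof -
  have "slope G X (\<lambda>x. \<Sum>m\<in>M. c m * g m x) e u = (\<Sum>m\<in>M. c m * slope G X (g m) e u)" for e u
    unfolding slope_def by (simp add: sum_subtractf[symmetric] sum_divide_distrib right_diff_distrib)
  then show ?thesis unfolding lap_def sum_distrib_left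
    by (subst sum.swap) (simp add: sum_distrib_left mult.left_commute sum.swap[of _ M])
qed

lemma lap_cong:
  assumes "subdivision G X" "\<And>x. x \<in> nodes G X \<Longrightarrow> f x = g x"
  shows "lap G X f n = lap G X g n"
  unfolding lap_def using slope_cong[OF assms(1) _ _ assms(2)] by simp

lemma lap_as_matrix:
  assumes "subdivision G X"
  shows "lap G X f n = (\<Sum>m\<in>nodes G X. lap G X (\<lambda>x. of_bool (x = m)) n * f m)"
proof -
  have fin: "finite (nodes G X)" using subdivisionD(2)[OF assms] .
  have "lap G X f n = lap G X (\<lambda>x. \<Sum>m\<in>nodes G X. f m * of_bool (x = m)) n"
    using sum_mult_of_bool_point[OF fin, of _ f] by (intro lap_cong[OF assms]) (simp add: eq_commute)
  also have "\<dots> = (\<Sum>m\<in>nodes G X. f m * lap G X (\<lambda>x. of_bool (x = m)) n)"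
    by (rule lap_sum[OF fin])
  finally show ?thesis by (simp add: mult.commute)
qed

lemma sum_lap_eq_0:
  assumes "subdivision G X"
  shows "(\<Sum>n\<in>nodes G X. lap G X f n) = 0"
  using green[OF assms, of "\<lambda>_. 1" f] unfolding energy_def by simp

lemma energy_eq_0_imp_seg_const:
  assumes sd: "subdivision G X" and "energy G X d d = 0" and e: "e \<in> edges G" and a: "a \<in> seg_starts G X e"
  shows "d (edge_pt G e (seg_end G X e a)) = d (edge_pt G e a)"
proof -
  define T where "T e a = (d (edge_pt G e (seg_end G X e a)) - d (edge_pt G e a))\<^sup>2 / (seg_end G X e a - a)" for e a
  have T_nonneg: "0 \<le> T e a" if "e \<in> edges G" "a \<in> seg_starts G X e" for e a
    using seg_startsD(5)[OF sd that] unfolding T_def by simp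
  have "(\<Sum>e\<in>edges G. \<Sum>a\<in>seg_starts G X e. T e a) = 0"
    using assms(2) unfolding energy_def T_def by (simp add: power2_eq_square)
  then have "(\<Sum>a\<in>seg_starts G X e. T e a) = 0"
    using e T_nonneg by (subst (asm) sum_nonneg_eq_0_iff) (auto simp: subdivisionD(1)[OF sd] intro: sum_nonneg)
  then have "T e a = 0"
    using a T_nonneg[OF e] by (subst (asm) sum_nonneg_eq_0_iff) (auto simp: seg_starts_finite[OF sd e])
  then show ?thesis using seg_startsD(5)[OF sd e a] unfolding T_def by simp
qed

lemma seg_const_imp_nodes_const:
  assumes sd: "subdivision G X"
    and seg: "\<And>e a. e \<in> edges G \<Longrightarrow> a \<in> seg_starts G X e \<Longrightarrow> d (edge_pt G e (seg_end G X e a)) = d (edge_pt G e a)"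
    and nodes: "m \<in> nodes G X" "n \<in> nodes G X"
  shows "d m = (d n :: real)"
proof -
  have along: "d (edge_pt G e b) = d (edge_pt G e 0)" if e: "e \<in> edges G" and b: "b \<in> breaks G X e" for e b
  proof -
    interpret interval_partition "breaks G X e" "len G e" by (rule breaks_partition[OF sd e])
    show ?thesis
    proof (rule succ_in_induct[where P = "\<lambda>b. d (edge_pt G e b) = d (edge_pt G e 0)", OF b])
      fix a assume "a \<in> breaks G X e" "a < len G e" "d (edge_pt G e a) = d (edge_pt G e 0)"
      then show "d (edge_pt G e (succ_in (breaks G X e) a)) = d (edge_pt G e 0)"
        using seg[OF e, of a] unfolding seg_starts_def seg_end_def by simp
    qed simp
  qed
  have ends_eq: "d (Vert (snd (ends G e))) = d (Vert (fst (ends G e)))" if e: "e \<in> edges G" for e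
    using along[OF e interval_partition.right_mem[OF breaks_partition[OF sd e]]]
      edge_pt_left[of G e] edge_pt_right[of G e] subdivisionD(5)[OF sd e] by simp
  have adj_eq: "d (Vert u) = d (Vert w)" if uw: "(u, w) \<in> adj G" for u w
  proof -
    obtain e where e: "e \<in> edges G" "(u, w) = ends G e \<or> (u, w) = prod.swap (ends G e)"
      using uw unfolding adj_def by blast
    obtain a b where "ends G e = (a, b)" by fastforce
    then show ?thesis using e ends_eq[OF e(1)] by auto
  qed
  have verts_eq: "d (Vert u) = d (Vert w)" if "u \<in> verts G" "w \<in> verts G" for u w
  proof -
    have "(u, w) \<in> (adj G)\<^sup>*" using subdivisionD(4)[OF sd] that unfolding connected_mg_def by blast
    then show ?thesis by (induction rule: rtrancl_induct) (auto dest: adj_eq)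
  qed
  have at_vertex: "\<exists>u\<in>verts G. d n = d (Vert u)" if "n \<in> nodes G X" for n
  proof (cases "n \<in> X")
    case True
    then obtain e u where eu: "n = Inner e u" "e \<in> edges G" "0 < u" "u < len G e"
      using subdivisionD(3)[OF sd] unfolding interior_pts_def by auto
    have "u \<in> breaks G X e" using True eu unfolding breaks_def by auto
    have "d n = d (edge_pt G e u)" using eu edge_pt_inner[OF eu(3,4)] by simp
    also have "\<dots> = d (edge_pt G e 0)" by (rule along[OF eu(2) \<open>u \<in> breaks G X e\<close>])
    also have "\<dots> = d (Vert (fst (ends G e)))" using edge_pt_left[of G e] subdivisionD(5)[OF sd eu(2)] by simp
    finally show ?thesis using subdivisionD(5)[OF sd eu(2)] by blast
  next
    case False then show ?thesis using that unfolding nodes_def by auto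
  qed
  obtain u w where "u \<in> verts G" "d m = d (Vert u)" "w \<in> verts G" "d n = d (Vert w)"
    using at_vertex[OF nodes(1)] at_vertex[OF nodes(2)] by blast
  then show ?thesis using verts_eq[of u w] by simp
qed

lemma lap_eq_0_imp_eq_0:
  assumes sd: "subdivision G X" and harmonic: "\<And>n. n \<in> nodes G X \<Longrightarrow> lap G X d n = 0"
    and z: "z \<in> nodes G X" "d z = 0" and n: "n \<in> nodes G X"
  shows "d n = 0"
proof -
  have "energy G X d d = 0" using green[OF sd, of d d] harmonic by simp
  from seg_const_imp_nodes_const[OF sd energy_eq_0_imp_seg_const[OF sd this] n z(1)]
  show ?thesis using z(2) by simp
qed

lemma lap_unique:
  assumes sd: "subdivision G X" and eq: "\<And>n. n \<in> nodes G X \<Longrightarrow> lap G X f n = lap G X g n"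
    and z: "z \<in> nodes G X" "f z = g z" and n: "n \<in> nodes G X"
  shows "f n = g n"
  using lap_eq_0_imp_eq_0[OF sd _ z(1) _ n, of "\<lambda>x. 1 * f x + (-1) * g x + 0"]
    lap_linear[of G X 1 f "-1" g 0] eq z(2)
  by simp

lemma lap_solvable:
  assumes sd: "subdivision G X" and y: "y \<in> nodes G X" and z: "z \<in> nodes G X"
  obtains v where "\<And>n. n \<in> nodes G X \<Longrightarrow> lap G X v n = of_bool (n = z) - of_bool (n = y)" "v z = 0"
proof -
  let ?N = "nodes G X" and ?N' = "nodes G X - {z}"
  define A where "A n m = lap G X (\<lambda>x. of_bool (x = m)) n" for n m
  have fin: "finite ?N" using subdivisionD(2)[OF sd] .
  have lap_grounded: "lap G X (v(z := 0)) n = (\<Sum>m\<in>?N'. A n m * v m)" for v n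
  proof -
    have "lap G X (v(z := 0)) n = A n z * (v(z := 0)) z + (\<Sum>m\<in>?N'. A n m * (v(z := 0)) m)"
      unfolding lap_as_matrix[OF sd, of "v(z := 0)" n] A_def by (rule sum.remove[OF fin z])
    also have "\<dots> = (\<Sum>m\<in>?N'. A n m * v m)" by (auto intro!: sum.cong)
    finally show ?thesis .
  qed
  have lap_at_z: "lap G X f z = - (\<Sum>n\<in>?N'. lap G X f n)" for f
    using sum_lap_eq_0[OF sd, of f] sum.remove[OF fin z, of "lap G X f"] by simp
  define b where "b n = (of_bool (n = z) - of_bool (n = y) :: real)" for n
  have "(\<Sum>n\<in>?N. b n) = (\<Sum>n\<in>?N. of_bool (n = z)) - (\<Sum>n\<in>?N. of_bool (n = y))"
    unfolding b_def by (rule sum_subtractf)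
  also have "\<dots> = 0" using fin y z by simp
  finally have sum_b: "(\<Sum>n\<in>?N. b n) = 0" .
  \<comment> \<open>Grounded at \<open>z\<close>, the system is injective; the equation at \<open>z\<close> then holds because
    both sides sum to zero over all nodes.\<close>
  have "\<exists>v. \<forall>n\<in>?N'. (\<Sum>m\<in>?N'. A n m * v m) = b n"
  proof (rule linear_system_solvable_if_inj)
    show "finite ?N'" using fin by simp
    fix v assume h: "\<forall>n\<in>?N'. (\<Sum>m\<in>?N'. A n m * v m) = 0"
    have harmonic: "lap G X (v(z := 0)) n = 0" if "n \<in> ?N" for n
      using lap_at_z[of "v(z := 0)"] lap_grounded h that by (cases "n = z") simp_all
    have "(v(z := 0)) n = 0" if "n \<in> ?N" for n
      using lap_eq_0_imp_eq_0[OF sd harmonic z(1) fun_upd_same that] .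
    then show "\<forall>m\<in>?N'. v m = 0" by (metis DiffD1 DiffD2 fun_upd_other singletonI)
  qed
  then obtain v where v: "\<forall>n\<in>?N'. (\<Sum>m\<in>?N'. A n m * v m) = b n" by blast
  have "lap G X (v(z := 0)) n = b n" if n: "n \<in> ?N" for n
  proof (cases "n = z")
    case True
    have "lap G X (v(z := 0)) z = - (\<Sum>n\<in>?N'. b n)" using lap_at_z lap_grounded v by simp
    also have "\<dots> = b z" using sum_b sum.remove[OF fin z, of b] by simp
    finally show ?thesis using True by simp
  next
    case False then show ?thesis using lap_grounded v n by simp
  qed
  then show ?thesis using that[of "v(z := 0)"] unfolding b_def by simp
qed

section \<open>Potentials that are affine between nodes\<close>

definition affine_on_segs :: "('v,'e,'z) mgraph_scheme \<Rightarrow> ('v,'e) point set \<Rightarrow> (('v,'e) point \<Rightarrow> real) \<Rightarrow> bool" where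
  "affine_on_segs G X f \<longleftrightarrow> (\<forall>e\<in>edges G. \<forall>a\<in>seg_starts G X e. \<forall>u\<in>{a..seg_end G X e a}.
     f (edge_pt G e u) = f (edge_pt G e a) + (u - a) * slope G X f e a)"

lemma affine_on_segsD:
  assumes "affine_on_segs G X f" "e \<in> edges G" "a \<in> seg_starts G X e" "u \<in> {a..seg_end G X e a}"
  shows "f (edge_pt G e u) = (f (edge_pt G e a) - a * slope G X f e a) + slope G X f e a * u"
  using assms unfolding affine_on_segs_def by (simp add: algebra_simps)

lemma seg_start_seg:
  assumes "subdivision G X" "e \<in> edges G" "0 \<le> u" "u \<le> len G e"
  shows "seg_start (breaks G X e) (len G e) u \<in> seg_starts G X e"
    "u \<in> {seg_start (breaks G X e) (len G e) u..seg_end G X e (seg_start (breaks G X e) (len G e) u)}"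
proof -
  interpret interval_partition "breaks G X e" "len G e" by (rule breaks_partition[OF assms(1,2)])
  show "seg_start (breaks G X e) (len G e) u \<in> seg_starts G X e"
    using seg_start_mem seg_start_less assms(3) unfolding seg_starts_def by simp
  show "u \<in> {seg_start (breaks G X e) (len G e) u..seg_end G X e (seg_start (breaks G X e) (len G e) u)}"
    using seg_start_le le_succ_in_seg_start assms(3,4) unfolding seg_end_def by simp
qed

lemma right_slope_affine:
  assumes "a \<le> t" "t < b" "\<And>u. u \<in> {a..b} \<Longrightarrow> \<phi> u = \<alpha> + \<beta> * u"
  shows "right_slope \<phi> t = \<beta>"
proof -
  have "((\<lambda>u. \<alpha> + \<beta> * u) has_real_derivative \<beta>) (at t within {t..b})"
    by (auto intro!: derivative_eq_intros)
  then have "(\<phi> has_real_derivative \<beta>) (at t within {t..b})"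
    by (rule has_field_derivative_transform_within[of _ _ _ _ 1]) (use assms in auto)
  then have D: "(\<phi> has_real_derivative \<beta>) (at_right t)" using at_within_Icc_at_right[OF assms(2)] by simp
  show ?thesis
    unfolding right_slope_def
  proof (rule the_equality)
    fix d assume "(\<phi> has_real_derivative d) (at_right t)"
    then show "d = \<beta>" using has_field_derivative_unique[OF _ D] by simp
  qed (rule D)
qed

lemma left_slope_affine:
  assumes "a < t" "t \<le> b" "\<And>u. u \<in> {a..b} \<Longrightarrow> \<phi> u = \<alpha> + \<beta> * u"
  shows "left_slope \<phi> t = \<beta>"
proof -
  have "((\<lambda>u. \<alpha> + \<beta> * u) has_real_derivative \<beta>) (at t within {a..t})"
    by (auto intro!: derivative_eq_intros)
  then have "(\<phi> has_real_derivative \<beta>) (at t within {a..t})"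
    by (rule has_field_derivative_transform_within[of _ _ _ _ 1]) (use assms in auto)
  then have D: "(\<phi> has_real_derivative \<beta>) (at_left t)" using at_within_Icc_at_left[OF assms(1)] by simp
  show ?thesis
    unfolding left_slope_def
  proof (rule the_equality)
    fix d assume "(\<phi> has_real_derivative d) (at_left t)"
    then show "d = \<beta>" using has_field_derivative_unique[OF _ D] by simp
  qed (rule D)
qed

lemma one_sided_slopes_seg:
  assumes f: "affine_on_segs G X f" and e: "e \<in> edges G" and a: "a \<in> seg_starts G X e"
    and t: "a \<le> t" "t \<le> seg_end G X e a"
  shows "t < seg_end G X e a \<Longrightarrow> right_slope (\<lambda>u. f (edge_pt G e u)) t = slope G X f e a"
    "a < t \<Longrightarrow> left_slope (\<lambda>u. f (edge_pt G e u)) t = slope G X f e a"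
  using right_slope_affine[OF t(1) _ affine_on_segsD[OF f e a]] left_slope_affine[OF _ t(2) affine_on_segsD[OF f e a]]
  by auto

lemma right_slope_eq_left_slope:
  assumes sd: "subdivision G X" and f: "affine_on_segs G X f" and e: "e \<in> edges G"
    and u: "0 < u" "u < len G e" "u \<notin> breaks G X e"
  shows "right_slope (\<lambda>u. f (edge_pt G e u)) u = left_slope (\<lambda>u. f (edge_pt G e u)) u"
proof -
  let ?a = "seg_start (breaks G X e) (len G e) u"
  have a: "?a \<in> seg_starts G X e" and u_seg: "u \<in> {?a..seg_end G X e ?a}"
    using seg_start_seg[OF sd e] u by auto
  have "?a \<noteq> u" "seg_end G X e ?a \<noteq> u" using u(3) a seg_startsD(1,4)[OF sd e a] by auto
  then show ?thesis using one_sided_slopes_seg[OF f e a] u_seg by auto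
qed

lemma params_at_node_subset_breaks:
  assumes sd: "subdivision G X" and e: "e \<in> edges G" and n: "n \<in> nodes G X"
  shows "{t\<in>{0..len G e}. edge_pt G e t = n} \<subseteq> breaks G X e"
proof
  fix t assume "t \<in> {t\<in>{0..len G e}. edge_pt G e t = n}"
  then have t: "0 \<le> t" "t \<le> len G e" "edge_pt G e t = n" by auto
  show "t \<in> breaks G X e"
    using t(1,2) interval_partition.pos[OF breaks_partition[OF sd e]]
  proof (cases rule: edge_pt_cases)
    case 3
    then have "Inner e t \<in> X" using n t(3) unfolding nodes_def by auto
    then show ?thesis unfolding breaks_def by simp
  qed (simp_all add: breaks_def)
qed

lemma sum_right_slopes_at_node:
  assumes sd: "subdivision G X" and f: "affine_on_segs G X f" and e: "e \<in> edges G" and n: "n \<in> nodes G X"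
  shows "(\<Sum>t\<in>{t\<in>{0..len G e}. edge_pt G e t = n}. if t < len G e then right_slope (\<lambda>u. f (edge_pt G e u)) t else 0)
    = (\<Sum>a\<in>seg_starts G X e. of_bool (edge_pt G e a = n) * slope G X f e a)"
proof -
  let ?T = "{t\<in>{0..len G e}. edge_pt G e t = n}"
  have T: "?T \<subseteq> breaks G X e" by (rule params_at_node_subset_breaks[OF sd e n])
  have fin: "finite ?T" using T interval_partition.finite[OF breaks_partition[OF sd e]] by (rule finite_subset)
  have starts: "{t\<in>?T. t < len G e} = {a\<in>seg_starts G X e. edge_pt G e a = n}"
    using T interval_partition.subset[OF breaks_partition[OF sd e]] unfolding seg_starts_def by auto
  have "(\<Sum>t\<in>?T. if t < len G e then right_slope (\<lambda>u. f (edge_pt G e u)) t else 0)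
      = (\<Sum>t\<in>{t\<in>?T. t < len G e}. right_slope (\<lambda>u. f (edge_pt G e u)) t)"
    by (rule sum.inter_filter[OF fin, symmetric])
  also have "\<dots> = (\<Sum>a\<in>{a\<in>seg_starts G X e. edge_pt G e a = n}. right_slope (\<lambda>u. f (edge_pt G e u)) a)"
    unfolding starts ..
  also have "\<dots> = (\<Sum>a\<in>{a\<in>seg_starts G X e. edge_pt G e a = n}. slope G X f e a)"
    using one_sided_slopes_seg(1)[OF f e] seg_startsD(5)[OF sd e] by (intro sum.cong) auto
  also have "\<dots> = (\<Sum>a\<in>seg_starts G X e. of_bool (edge_pt G e a = n) * slope G X f e a)"
    using seg_starts_finite[OF sd e] by (simp add: Int_def)
  finally show ?thesis .
qed

lemma sum_left_slopes_at_node: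
  assumes sd: "subdivision G X" and f: "affine_on_segs G X f" and e: "e \<in> edges G" and n: "n \<in> nodes G X"
  shows "(\<Sum>t\<in>{t\<in>{0..len G e}. edge_pt G e t = n}. if 0 < t then left_slope (\<lambda>u. f (edge_pt G e u)) t else 0)
    = (\<Sum>a\<in>seg_starts G X e. of_bool (edge_pt G e (seg_end G X e a) = n) * slope G X f e a)"
proof -
  interpret interval_partition "breaks G X e" "len G e" by (rule breaks_partition[OF sd e])
  let ?T = "{t\<in>{0..len G e}. edge_pt G e t = n}" and ?A = "{a\<in>seg_starts G X e. edge_pt G e (seg_end G X e a) = n}"
  have T: "?T \<subseteq> breaks G X e" by (rule params_at_node_subset_breaks[OF sd e n])
  have fin: "finite ?T" using T finite by (rule finite_subset)
  have ends: "{t\<in>?T. 0 < t} = seg_end G X e ` ?A"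
  proof
    show "{t\<in>?T. 0 < t} \<subseteq> seg_end G X e ` ?A"
    proof
      fix t assume t: "t \<in> {t\<in>?T. 0 < t}"
      then obtain a where "a \<in> breaks G X e" "a < len G e" "succ_in (breaks G X e) a = t"
        using T succ_in_onto[of t] by auto
      then show "t \<in> seg_end G X e ` ?A" using t unfolding seg_starts_def seg_end_def by auto
    qed
    show "seg_end G X e ` ?A \<subseteq> {t\<in>?T. 0 < t}"
      using seg_startsD[OF sd e] by fastforce
  qed
  have inj: "inj_on (seg_end G X e) ?A"
    using inj_on_succ_in unfolding seg_end_def seg_starts_def by (rule inj_on_subset) auto
  have "(\<Sum>t\<in>?T. if 0 < t then left_slope (\<lambda>u. f (edge_pt G e u)) t else 0)
      = (\<Sum>t\<in>{t\<in>?T. 0 < t}. left_slope (\<lambda>u. f (edge_pt G e u)) t)"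
    by (rule sum.inter_filter[OF fin, symmetric])
  also have "\<dots> = (\<Sum>t\<in>seg_end G X e ` ?A. left_slope (\<lambda>u. f (edge_pt G e u)) t)"
    unfolding ends ..
  also have "\<dots> = (\<Sum>a\<in>?A. left_slope (\<lambda>u. f (edge_pt G e u)) (seg_end G X e a))"
    by (rule sum.reindex[OF inj, unfolded comp_def])
  also have "\<dots> = (\<Sum>a\<in>?A. slope G X f e a)"
    using one_sided_slopes_seg(2)[OF f e] seg_startsD(5)[OF sd e] by (intro sum.cong) auto
  also have "\<dots> = (\<Sum>a\<in>seg_starts G X e. of_bool (edge_pt G e (seg_end G X e a) = n) * slope G X f e a)"
    using seg_starts_finite[OF sd e] by (simp add: Int_def)
  finally show ?thesis .
qed

lemma flux_eq_lap:
  assumes sd: "subdivision G X" and f: "affine_on_segs G X f" and n: "n \<in> nodes G X"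
  shows "flux G f n = lap G X f n"
  unfolding flux_def lap_def
proof (rule sum.cong[OF refl])
  fix e assume e: "e \<in> edges G"
  show "(\<Sum>t\<in>{t\<in>{0..len G e}. edge_pt G e t = n}.
      (if t < len G e then right_slope (\<lambda>u. f (edge_pt G e u)) t else 0)
      - (if 0 < t then left_slope (\<lambda>u. f (edge_pt G e u)) t else 0))
    = (\<Sum>a\<in>seg_starts G X e.
      (of_bool (edge_pt G e a = n) - of_bool (edge_pt G e (seg_end G X e a) = n)) * slope G X f e a)"
    unfolding sum_subtractf sum_right_slopes_at_node[OF sd f e n] sum_left_slopes_at_node[OF sd f e n]
    by (simp only: left_diff_distrib sum_subtractf)
qed

lemma flux_eq_0_off_nodes:
  assumes sd: "subdivision G X" and f: "affine_on_segs G X f" and p: "p \<in> pts G" "p \<notin> nodes G X"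
  shows "flux G f p = 0"
proof -
  obtain e0 u0 where p_eq: "p = Inner e0 u0" and e0: "e0 \<in> edges G" and u0: "0 < u0" "u0 < len G e0"
    using p by (cases rule: pts_cases) (auto simp: nodes_def)
  have "u0 \<notin> breaks G X e0" using p_eq p(2) u0 unfolding breaks_def nodes_def by auto
  have params: "{t\<in>{0..len G e}. edge_pt G e t = p} = (if e = e0 then {u0} else {})" if e: "e \<in> edges G" for e
  proof -
    have "edge_pt G e t = p \<longleftrightarrow> e = e0 \<and> t = u0" if "0 \<le> t" "t \<le> len G e" for t
      using that interval_partition.pos[OF breaks_partition[OF sd e]]
      by (cases rule: edge_pt_cases) (use u0 in \<open>auto simp: p_eq\<close>)
    then show ?thesis using u0 by auto
  qed
  show ?thesis
    unfolding flux_def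
  proof (rule sum.neutral, rule ballI)
    fix e assume "e \<in> edges G"
    then show "(\<Sum>t\<in>{t\<in>{0..len G e}. edge_pt G e t = p}.
        (if t < len G e then right_slope (\<lambda>u. f (edge_pt G e u)) t else 0)
        - (if 0 < t then left_slope (\<lambda>u. f (edge_pt G e u)) t else 0)) = 0"
      unfolding params[OF \<open>e \<in> edges G\<close>]
      using right_slope_eq_left_slope[OF sd f e0 u0 \<open>u0 \<notin> breaks G X e0\<close>] u0 by simp
  qed
qed

lemma voltage_sol_affine_on_segs:
  assumes sd: "subdivision G X" and f: "voltage_sol G y z f" and yz: "y \<in> nodes G X" "z \<in> nodes G X"
  shows "affine_on_segs G X f"
  unfolding affine_on_segs_def
proof (intro ballI)
  fix e a u assume e: "e \<in> edges G" and a: "a \<in> seg_starts G X e" and u: "u \<in> {a..seg_end G X e a}"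
  note S = seg_startsD[OF sd e a]
  have "edge_pt G e t \<notin> {y, z}" if t: "a < t" "t < seg_end G X e a" for t
  proof
    have t_inner: "0 < t" "t < len G e" using S t by auto
    assume "edge_pt G e t \<in> {y, z}"
    then have "Inner e t \<in> X"
      using interior_node_in_subdivision[of _ G X] yz e t_inner edge_pt_inner[OF t_inner]
      unfolding interior_pts_def by auto
    then have "t \<in> breaks G X e" unfolding breaks_def by auto
    then show False using S(7)[of t] t by auto
  qed
  then obtain \<alpha> \<beta> where ab: "\<forall>t\<in>{a..seg_end G X e a}. f (edge_pt G e t) = \<alpha> + \<beta> * t"
    using f S(2,5,6) e unfolding voltage_sol_def pl_adapted_def by blast
  have "slope G X f e a = \<beta>" unfolding slope_def using ab S(5) by (simp add: field_simps)
  then show "f (edge_pt G e u) = f (edge_pt G e a) + (u - a) * slope G X f e a"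
    using ab u S(5) by (simp add: algebra_simps)
qed

definition interpolate :: "('v,'e,'z) mgraph_scheme \<Rightarrow> ('v,'e) point set \<Rightarrow> (('v,'e) point \<Rightarrow> real) \<Rightarrow> ('v,'e) point \<Rightarrow> real" where
  "interpolate G X v p = (if p \<in> pts G then (case p of Vert w \<Rightarrow> v p | Inner e u \<Rightarrow>
      let a = seg_start (breaks G X e) (len G e) u in v (edge_pt G e a) + (u - a) * slope G X v e a)
     else 0)"

lemma interpolate_node:
  assumes sd: "subdivision G X" and n: "n \<in> nodes G X"
  shows "interpolate G X v n = v n"
proof -
  have np: "n \<in> pts G" using nodes_subset_pts[OF sd] n by auto
  then show ?thesis
  proof (cases rule: pts_cases)
    case (1 w) then show ?thesis using np unfolding interpolate_def by simp
  next
    case (2 e u)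
    interpret interval_partition "breaks G X e" "len G e" by (rule breaks_partition[OF sd 2(2)])
    have "n \<in> X" using n 2 unfolding nodes_def by auto
    then have ub: "u \<in> breaks G X e" using 2 unfolding breaks_def by auto
    have "seg_start (breaks G X e) (len G e) u = u"
      using seg_start_eq[OF ub] succ_in_gt 2 by simp
    then show ?thesis using np 2 edge_pt_inner[OF 2(3,4)] unfolding interpolate_def by simp
  qed
qed

lemma affine_on_segs_interpolate:
  assumes sd: "subdivision G X"
  shows "affine_on_segs G X (interpolate G X v)"
  unfolding affine_on_segs_def
proof (intro ballI)
  fix e a u assume e: "e \<in> edges G" and a: "a \<in> seg_starts G X e" and u: "u \<in> {a..seg_end G X e a}"
  interpret interval_partition "breaks G X e" "len G e" by (rule breaks_partition[OF sd e])
  note S = seg_startsD[OF sd e a]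
  have slope_eq: "slope G X (interpolate G X v) e a = slope G X v e a"
    by (rule slope_cong[OF sd e a interpolate_node[OF sd]])
  have at_nodes: "interpolate G X v (edge_pt G e a) = v (edge_pt G e a)"
    "interpolate G X v (edge_pt G e (seg_end G X e a)) = v (edge_pt G e (seg_end G X e a))"
    using interpolate_node[OF sd seg_ends_nodes(1)[OF sd e a]] interpolate_node[OF sd seg_ends_nodes(2)[OF sd e a]]
    by auto
  consider "u = a" | "u = seg_end G X e a" | "a < u" "u < seg_end G X e a" using u by fastforce
  then show "interpolate G X v (edge_pt G e u) = interpolate G X v (edge_pt G e a) + (u - a) * slope G X (interpolate G X v) e a"
  proof cases
    case 2
    then show ?thesis using at_nodes slope_eq S(5) unfolding slope_def by (simp add: field_simps)
  next
    case 3
    then have u_inner: "0 < u" "u < len G e" using S by auto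
    have "Inner e u \<in> pts G" using e u_inner unfolding pts_def by auto
    moreover have "seg_start (breaks G X e) (len G e) u = a"
      using seg_start_eq S 3 unfolding seg_end_def by simp
    ultimately show ?thesis
      unfolding slope_eq at_nodes edge_pt_inner[OF u_inner] unfolding interpolate_def by simp
  qed simp
qed

lemma pl_adapted_if_affine_on_segs:
  assumes sd: "subdivision G X" and f: "affine_on_segs G X f" and XB: "X \<subseteq> B"
  shows "pl_adapted G B f"
  unfolding pl_adapted_def
proof (intro ballI allI impI)
  fix e a0 b0
  assume e: "e \<in> edges G"
    and H: "0 \<le> a0 \<and> a0 < b0 \<and> b0 \<le> len G e \<and> (\<forall>t. a0 < t \<and> t < b0 \<longrightarrow> edge_pt G e t \<notin> B)"
  interpret interval_partition "breaks G X e" "len G e" by (rule breaks_partition[OF sd e])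
  let ?a = "seg_start (breaks G X e) (len G e) a0"
  have a: "?a \<in> seg_starts G X e" and a0: "a0 \<in> {?a..seg_end G X e ?a}"
    using seg_start_seg[OF sd e] H by auto
  note S = seg_startsD[OF sd e a]
  have "a0 < seg_end G X e ?a"
  proof (rule ccontr)
    assume "\<not> ?thesis"
    then have "seg_end G X e ?a = a0" using a0 by simp
    then show False using seg_start_max[of a0 a0] S(4,5) H by force
  qed
  moreover have "b0 \<le> seg_end G X e ?a"
  proof (rule ccontr)
    assume "\<not> ?thesis"
    then have inner: "0 < seg_end G X e ?a" "seg_end G X e ?a < len G e" using H S by auto
    then have "Inner e (seg_end G X e ?a) \<in> X" using S(4) unfolding breaks_def by auto
    then have "edge_pt G e (seg_end G X e ?a) \<in> B" using edge_pt_inner[OF inner] XB by auto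
    then show False using H \<open>a0 < seg_end G X e ?a\<close> \<open>\<not> b0 \<le> seg_end G X e ?a\<close> by auto
  qed
  ultimately have "{a0..b0} \<subseteq> {?a..seg_end G X e ?a}" using a0 by auto
  then show "\<exists>\<alpha> \<beta>. \<forall>t\<in>{a0..b0}. f (edge_pt G e t) = \<alpha> + \<beta> * t"
    using affine_on_segsD[OF f e a] by blast
qed

lemma affine_on_segs_eqI:
  assumes sd: "subdivision G X" and f: "affine_on_segs G X f" and g: "affine_on_segs G X g"
    and nodes: "\<And>n. n \<in> nodes G X \<Longrightarrow> f n = g n"
    and off: "\<And>p. p \<notin> pts G \<Longrightarrow> f p = 0 \<and> g p = 0"
  shows "f = g"
proof
  fix p show "f p = g p"
  proof (cases "p \<in> pts G")
    case True
    then show ?thesis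
    proof (cases rule: pts_cases)
      case (1 w) then show ?thesis using nodes unfolding nodes_def by simp
    next
      case (2 e u)
      let ?a = "seg_start (breaks G X e) (len G e) u"
      have a: "?a \<in> seg_starts G X e" "u \<in> {?a..seg_end G X e ?a}" using seg_start_seg[OF sd 2(2)] 2 by auto
      have "f (edge_pt G e u) = g (edge_pt G e u)"
        using affine_on_segsD[OF f 2(2) a] affine_on_segsD[OF g 2(2) a]
          nodes[OF seg_ends_nodes(1)[OF sd 2(2) a(1)]] slope_cong[OF sd 2(2) a(1) nodes] by simp
      then show ?thesis using edge_pt_inner[OF 2(3,4)] 2(1) by simp
    qed
  qed (use off in simp)
qed

section \<open>Voltages\<close>

definition voltage :: "('v,'e,'z) mgraph_scheme \<Rightarrow> ('v,'e) point \<Rightarrow> ('v,'e) point \<Rightarrow> ('v,'e) point \<Rightarrow> real" where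
  "voltage G y z = (THE f. voltage_sol G y z f)"

lemma jv_eq_voltage: "jv G z x y = voltage G y z x"
  unfolding jv_def voltage_def ..

lemma res_eq_voltage: "res G x y = voltage G x y x"
  unfolding res_def jv_eq_voltage ..

lemma voltage_sol_lap:
  assumes sd: "subdivision G X" and f: "voltage_sol G y z f" and yz: "y \<in> nodes G X" "z \<in> nodes G X"
    and n: "n \<in> nodes G X"
  shows "lap G X f n = of_bool (n = z) - of_bool (n = y)"
proof -
  have "lap G X f n = flux G f n"
    using flux_eq_lap[OF sd voltage_sol_affine_on_segs[OF sd f yz] n] by simp
  also have "\<dots> = of_bool (n = z) - of_bool (n = y)"
    using f nodes_subset_pts[OF sd] n unfolding voltage_sol_def by auto
  finally show ?thesis .
qed

lemma ex1_voltage_sol: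
  assumes G: "metrized_graph G" and y: "y \<in> pts G" and z: "z \<in> pts G"
  shows "\<exists>!f. voltage_sol G y z f"
proof -
  define X where "X = {y, z} \<inter> interior_pts G"
  have sd: "subdivision G X" and yz: "y \<in> nodes G X" "z \<in> nodes G X"
    using subdivision_through[OF G, of "{y, z}"] y z unfolding X_def by auto
  obtain v where v: "\<And>n. n \<in> nodes G X \<Longrightarrow> lap G X v n = of_bool (n = z) - of_bool (n = y)" "v z = 0"
    using lap_solvable[OF sd yz] by blast
  let ?f = "interpolate G X v"
  have f_affine: "affine_on_segs G X ?f" by (rule affine_on_segs_interpolate[OF sd])
  have "voltage_sol G y z ?f"
    unfolding voltage_sol_def
  proof (intro conjI ballI allI impI)
    show "pl_adapted G {y, z} ?f" by (rule pl_adapted_if_affine_on_segs[OF sd f_affine]) (simp add: X_def)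
    fix p assume p: "p \<in> pts G"
    show "flux G ?f p = (if p = z then 1 else 0) - (if p = y then 1 else 0)"
    proof (cases "p \<in> nodes G X")
      case True
      have "flux G ?f p = lap G X ?f p" by (rule flux_eq_lap[OF sd f_affine True])
      also have "\<dots> = lap G X v p" by (rule lap_cong[OF sd interpolate_node[OF sd]])
      finally show ?thesis using v True by simp
    next
      case False
      then show ?thesis using flux_eq_0_off_nodes[OF sd f_affine p False] yz by auto
    qed
  next
    show "?f z = 0" using interpolate_node[OF sd yz(2)] v by simp
  next
    fix p :: "('a, 'b) point" assume "p \<notin> pts G"
    then show "?f p = 0" unfolding interpolate_def by simp
  qed
  moreover have "f = g" if f: "voltage_sol G y z f" and g: "voltage_sol G y z g" for f g
  proof (rule affine_on_segs_eqI[OF sd voltage_sol_affine_on_segs[OF sd f yz] voltage_sol_affine_on_segs[OF sd g yz]])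
    fix n assume "n \<in> nodes G X"
    then show "f n = g n"
      using lap_unique[OF sd _ yz(2)] voltage_sol_lap[OF sd f yz] voltage_sol_lap[OF sd g yz] f g
      unfolding voltage_sol_def by metis
  qed (use f g in \<open>simp add: voltage_sol_def\<close>)
  ultimately show ?thesis by blast
qed

lemma voltage_sol_voltage:
  "metrized_graph G \<Longrightarrow> y \<in> pts G \<Longrightarrow> z \<in> pts G \<Longrightarrow> voltage_sol G y z (voltage G y z)"
  unfolding voltage_def by (rule theI'[OF ex1_voltage_sol])

lemma lap_voltage:
  assumes sd: "subdivision G X" and yz: "y \<in> nodes G X" "z \<in> nodes G X" and n: "n \<in> nodes G X"
  shows "lap G X (voltage G y z) n = of_bool (n = z) - of_bool (n = y)"
proof -
  have "metrized_graph G" using sd unfolding subdivision_def by simp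
  then have "voltage_sol G y z (voltage G y z)"
    using voltage_sol_voltage nodes_subset_pts[OF sd] yz by blast
  then show ?thesis using voltage_sol_lap[OF sd _ yz n] by simp
qed

lemma voltage_sink: "metrized_graph G \<Longrightarrow> y \<in> pts G \<Longrightarrow> z \<in> pts G \<Longrightarrow> voltage G y z z = 0"
  using voltage_sol_voltage unfolding voltage_sol_def by blast

lemma energy_dipole:
  assumes sd: "subdivision G X" and ab: "a \<in> nodes G X" "b \<in> nodes G X"
    and f: "\<And>n. n \<in> nodes G X \<Longrightarrow> lap G X f n = of_bool (n = b) - of_bool (n = a)"
  shows "w b - w a = - energy G X f w"
proof -
  have fin: "finite (nodes G X)" by (rule subdivisionD(2)[OF sd])
  have "(\<Sum>n\<in>nodes G X. w n * lap G X f n) = (\<Sum>n\<in>nodes G X. w n * of_bool (b = n) - w n * of_bool (a = n))"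
    using f by (intro sum.cong) (auto simp: right_diff_distrib eq_commute)
  also have "\<dots> = w b - w a"
    unfolding sum_subtractf sum_mult_of_bool_point[OF fin ab(1)] sum_mult_of_bool_point[OF fin ab(2)] ..
  finally show ?thesis using green[OF sd] by simp
qed

lemma lap_reciprocity:
  assumes sd: "subdivision G X" and nodes: "a \<in> nodes G X" "b \<in> nodes G X" "c \<in> nodes G X" "d \<in> nodes G X"
    and f: "\<And>n. n \<in> nodes G X \<Longrightarrow> lap G X f n = of_bool (n = b) - of_bool (n = a)"
    and g: "\<And>n. n \<in> nodes G X \<Longrightarrow> lap G X g n = of_bool (n = d) - of_bool (n = c)"
  shows "g b - g a = f d - f c"
  using energy_dipole[OF sd nodes(1,2) f] energy_dipole[OF sd nodes(3,4) g] energy_sym[of G X f g] by simp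

lemma jv_sym:
  assumes G: "metrized_graph G" and pts: "x \<in> pts G" "y \<in> pts G" "z \<in> pts G"
  shows "jv G z x y = jv G z y x"
proof -
  define X where "X = {x, y, z} \<inter> interior_pts G"
  have sd: "subdivision G X" and nodes: "x \<in> nodes G X" "y \<in> nodes G X" "z \<in> nodes G X"
    using subdivision_through[OF G, of "{x, y, z}"] pts unfolding X_def by auto
  have "voltage G x z z - voltage G x z y = voltage G y z z - voltage G y z x"
    by (rule lap_reciprocity[OF sd nodes(2,3,1,3) lap_voltage[OF sd nodes(2,3)] lap_voltage[OF sd nodes(1,3)]])
  then show ?thesis unfolding jv_eq_voltage using voltage_sink[OF G] pts by simp
qed

lemma res_nonneg:
  assumes G: "metrized_graph G" and pts: "x \<in> pts G" "y \<in> pts G"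
  shows "0 \<le> res G x y"
proof -
  define X where "X = {x, y} \<inter> interior_pts G"
  have sd: "subdivision G X" and nodes: "x \<in> nodes G X" "y \<in> nodes G X"
    using subdivision_through[OF G, of "{x, y}"] pts unfolding X_def by auto
  have "voltage G x y y - voltage G x y x = - energy G X (voltage G x y) (voltage G x y)"
    by (rule energy_dipole[OF sd nodes lap_voltage[OF sd nodes]])
  then show ?thesis
    using energy_nonneg[OF sd] voltage_sink[OF G pts] unfolding res_eq_voltage by simp
qed

section \<open>Cutting an edge\<close>

lemma delete_edge_simps [simp]:
  "edges (delete_edge G e) = edges G - {e}" "verts (delete_edge G e) = verts G"
  "ends (delete_edge G e) = ends G" "len (delete_edge G e) = len G"
  "edge_pt (delete_edge G e) = edge_pt G"
  unfolding delete_edge_def by (auto simp: edge_pt_def fun_eq_iff)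

lemma nodes_delete_edge [simp]: "nodes (delete_edge G e) X = nodes G X"
  unfolding nodes_def by simp

lemma metrized_graph_delete_edge:
  "metrized_graph G \<Longrightarrow> e \<in> edges G \<Longrightarrow> \<not> is_bridge G e \<Longrightarrow> metrized_graph (delete_edge G e)"
  unfolding metrized_graph_def is_bridge_def by auto

lemma pts_delete_edge_subset: "pts (delete_edge G e) \<subseteq> pts G"
  unfolding pts_def by auto

lemma lap_delete_edge:
  assumes sd: "subdivision G X" and e: "e \<in> edges G" and no_inner: "\<And>u. Inner e u \<notin> X"
  shows "lap G X f n = lap (delete_edge G e) X f n
     + (of_bool (n = Vert (fst (ends G e))) - of_bool (n = Vert (snd (ends G e))))
       * ((f (Vert (snd (ends G e))) - f (Vert (fst (ends G e)))) / len G e)"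
proof -
  have L: "0 < len G e" by (rule interval_partition.pos[OF breaks_partition[OF sd e]])
  have breaks_e: "breaks G X e = {0, len G e}" unfolding breaks_def using no_inner by auto
  then have starts_e: "seg_starts G X e = {0}" unfolding seg_starts_def using L by auto
  have "{c\<in>{0, len G e}. 0 < c} = {len G e}" using L by auto
  then have end_e: "seg_end G X e 0 = len G e" unfolding seg_end_def succ_in_def breaks_e by simp
  have same: "breaks (delete_edge G e) X = breaks G X" "seg_starts (delete_edge G e) X = seg_starts G X"
    "seg_end (delete_edge G e) X = seg_end G X" "slope (delete_edge G e) X = slope G X"
    unfolding breaks_def[abs_def] seg_starts_def[abs_def] seg_end_def[abs_def] slope_def[abs_def] by simp_all
  have "lap G X f n = lap (delete_edge G e) X f n + (\<Sum>a\<in>seg_starts G X e.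
      (of_bool (edge_pt G e a = n) - of_bool (edge_pt G e (seg_end G X e a) = n)) * slope G X f e a)"
    unfolding lap_def same delete_edge_simps
    using sum.remove[OF subdivisionD(1)[OF sd] e] by (simp add: add.commute)
  then show ?thesis
    unfolding starts_e slope_def using end_e edge_pt_left[OF L] edge_pt_right[OF L] by (simp add: eq_commute)
qed

locale edge_cut =
  fixes G :: "('v,'e,'z) mgraph_scheme" and e :: 'e and X :: "('v,'e) point set"
  assumes metrized: "metrized_graph G" and edge: "e \<in> edges G"
    and subdivision_cut: "subdivision (delete_edge G e) X"
begin

abbreviation "G' \<equiv> delete_edge G e"
abbreviation "P \<equiv> Vert (fst (ends G e))"
abbreviation "Q \<equiv> Vert (snd (ends G e))"
abbreviation "L \<equiv> len G e"
abbreviation "R \<equiv> res G' P Q"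

text \<open>\<open>h x\<close> is \<open>j\<^sub>P(x, Q)\<close> of \<open>G - e\<close>; by reciprocity it is the paper's \<open>j\<^sub>P(Q, x)\<close>.\<close>

abbreviation "h \<equiv> voltage G' Q P"

lemma subdivision: "subdivision G X"
  using metrized subdivision_cut unfolding subdivision_def interior_pts_def by auto

lemma ends_nodes: "P \<in> nodes G X" "Q \<in> nodes G X"
  using metrized edge unfolding metrized_graph_def nodes_def by auto

lemma metrized_cut: "metrized_graph G'"
  using subdivision_cut unfolding subdivision_def by simp

lemma nodes_pts: "n \<in> nodes G X \<Longrightarrow> n \<in> pts G" "n \<in> nodes G X \<Longrightarrow> n \<in> pts G'"
  using nodes_subset_pts[OF subdivision] nodes_subset_pts[OF subdivision_cut] by auto

lemma L_pos: "0 < L"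
  using metrized edge unfolding metrized_graph_def by auto

lemma R_nonneg: "0 \<le> R"
  by (rule res_nonneg[OF metrized_cut nodes_pts(2)[OF ends_nodes(1)] nodes_pts(2)[OF ends_nodes(2)]])

lemma no_inner_cut: "Inner e u \<notin> X"
  using subdivision_cut unfolding subdivision_def interior_pts_def by auto

lemma LR_pos: "0 < L + R"
  using L_pos R_nonneg by simp

lemma lap_cut:
  "lap G X f n = lap G' X f n + (of_bool (n = P) - of_bool (n = Q)) * ((f Q - f P) / L)"
  by (rule lap_delete_edge[OF subdivision edge no_inner_cut])

lemma lap_voltage_cut:
  "y \<in> nodes G X \<Longrightarrow> z \<in> nodes G X \<Longrightarrow> n \<in> nodes G X \<Longrightarrow>
    lap G' X (voltage G' y z) n = of_bool (n = z) - of_bool (n = y)"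
  using lap_voltage[OF subdivision_cut] by simp

lemma reciprocity_cut:
  assumes "a \<in> nodes G X" "b \<in> nodes G X" "c \<in> nodes G X" "d \<in> nodes G X"
  shows "voltage G' c d b - voltage G' c d a = voltage G' a b d - voltage G' a b c"
proof -
  have nodes': "a \<in> nodes G' X" "b \<in> nodes G' X" "c \<in> nodes G' X" "d \<in> nodes G' X"
    using assms by simp_all
  show ?thesis
    by (rule lap_reciprocity[OF subdivision_cut nodes' lap_voltage[OF subdivision_cut nodes'(1,2)]
          lap_voltage[OF subdivision_cut nodes'(3,4)]])
qed

lemma h_sink: "h P = 0"
  by (rule voltage_sink[OF metrized_cut nodes_pts(2)[OF ends_nodes(2)] nodes_pts(2)[OF ends_nodes(1)]])

lemma h_source: "h Q = R"
  using reciprocity_cut[OF ends_nodes(1,2,2,1)] h_sink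
    voltage_sink[OF metrized_cut nodes_pts(2)[OF ends_nodes(1)] nodes_pts(2)[OF ends_nodes(2)]]
  unfolding res_eq_voltage by simp

lemma voltage_QP:
  assumes x: "x \<in> nodes G X"
  shows "voltage G Q P x = L / (L + R) * h x"
proof (rule lap_unique[OF subdivision _ ends_nodes(1) _ x])
  fix n assume n: "n \<in> nodes G X"
  define D :: real where "D = of_bool (n = P) - of_bool (n = Q)"
  have "lap G X (\<lambda>x. L / (L + R) * h x) n = L / (L + R) * (lap G' X h n + D * (R / L))"
    using lap_cut lap_linear[of G' X "L / (L + R)" h 0 h 0 n] h_sink h_source unfolding D_def
    by (simp add: algebra_simps)
  also have "\<dots> = L / (L + R) * (D + D * (R / L))"
    using lap_voltage_cut[OF ends_nodes(2,1) n] unfolding D_def by simp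
  also have "\<dots> = L / (L + R) * (D * (L + R) / L)"
    using L_pos by (simp add: field_simps)
  also have "\<dots> = D"
    using L_pos LR_pos by simp
  finally show "lap G X (voltage G Q P) n = lap G X (\<lambda>x. L / (L + R) * h x) n"
    using lap_voltage[OF subdivision ends_nodes(2,1) n] unfolding D_def by simp
qed (use voltage_sink[OF metrized nodes_pts(1)[OF ends_nodes(2)] nodes_pts(1)[OF ends_nodes(1)]] h_sink in simp)

lemma res_cut:
  assumes s: "s \<in> nodes G X" and t: "t \<in> nodes G X"
  shows "res G s t = res G' s t - (h s - h t)\<^sup>2 / (L + R)"
proof -
  let ?g = "voltage G' s t"
  \<comment> \<open>the current through \<open>e\<close> from \<open>P\<close> to \<open>Q\<close> in \<open>G\<close>\<close>
  define I where "I = (h t - h s) / (L + R)"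
  have "?g Q - ?g P = - I * (L + R)"
    using reciprocity_cut[OF s t ends_nodes(2,1)] LR_pos unfolding I_def by simp
  then have g_flow: "?g Q - ?g P + I * R = - I * L" by (simp add: algebra_simps)
  have lap_eq: "lap G X (voltage G s t) n = lap G X (\<lambda>x. ?g x + I * (h x - h t)) n"
    if n: "n \<in> nodes G X" for n
  proof -
    define D :: real where "D = of_bool (n = P) - of_bool (n = Q)"
    have "lap G X (\<lambda>x. 1 * ?g x + I * h x + - I * h t) n
        = lap G' X ?g n + I * lap G' X h n + D * ((?g Q - ?g P + I * R) / L)"
      using lap_cut lap_linear[of G' X 1 ?g I h "- I * h t" n] h_sink h_source unfolding D_def
      by (simp add: algebra_simps)
    also have "\<dots> = of_bool (n = t) - of_bool (n = s) + I * D - I * D"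
      unfolding g_flow using lap_voltage_cut[OF s t n] lap_voltage_cut[OF ends_nodes(2,1) n] L_pos
      unfolding D_def by simp
    finally show ?thesis
      using lap_voltage[OF subdivision s t n] by (simp add: algebra_simps)
  qed
  have at_t: "voltage G s t t = ?g t + I * (h t - h t)"
    using voltage_sink[OF metrized nodes_pts(1)[OF s] nodes_pts(1)[OF t]]
      voltage_sink[OF metrized_cut nodes_pts(2)[OF s] nodes_pts(2)[OF t]] by simp
  have "voltage G s t s = ?g s + I * (h s - h t)"
    using lap_unique[OF subdivision lap_eq t at_t s] by simp
  moreover have "I * (h s - h t) = - (h s - h t)\<^sup>2 / (L + R)"
    unfolding I_def by (simp add: power2_eq_square algebra_simps minus_divide_left)
  ultimately show ?thesis unfolding res_eq_voltage by simp
qed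

end

lemma jv_delete_edge:
  assumes G: "metrized_graph G" and e: "e \<in> edges G" and nb: "\<not> is_bridge G e"
    and x: "x \<in> pts (delete_edge G e)"
  shows "jv G (Vert (fst (ends G e))) (Vert (snd (ends G e))) x
    = len G e / (len G e + res (delete_edge G e) (Vert (fst (ends G e))) (Vert (snd (ends G e))))
      * jv (delete_edge G e) (Vert (fst (ends G e))) (Vert (snd (ends G e))) x"
proof -
  define X where "X = {x} \<inter> interior_pts (delete_edge G e)"
  have G': "metrized_graph (delete_edge G e)" by (rule metrized_graph_delete_edge[OF G e nb])
  then have sd: "subdivision (delete_edge G e) X" and xn: "x \<in> nodes G X"
    using subdivision_through[OF G', of "{x}"] x unfolding X_def by auto
  interpret edge_cut G e X by standard (fact G, fact e, fact sd)
  have pts': "P \<in> pts G'" "Q \<in> pts G'" using ends_nodes nodes_subset_pts[OF sd] by auto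
  have pts: "P \<in> pts G" "Q \<in> pts G" "x \<in> pts G"
    using ends_nodes nodes_pts(1) x pts_delete_edge_subset[of G e] by auto
  have "jv G P Q x = voltage G Q P x" using jv_sym[OF G pts(2,3,1)] unfolding jv_eq_voltage by simp
  also have "\<dots> = L / (L + R) * h x" by (rule voltage_QP[OF xn])
  also have "h x = jv G' P Q x" using jv_sym[OF G' pts'(2) x pts'(1)] unfolding jv_eq_voltage by simp
  finally show ?thesis .
qed

lemma res_delete_edge:
  assumes G: "metrized_graph G" and e: "e \<in> edges G" and nb: "\<not> is_bridge G e"
    and s: "s \<in> pts (delete_edge G e)" and t: "t \<in> pts (delete_edge G e)"
  shows "res G s t = res (delete_edge G e) s t
    - (jv (delete_edge G e) (Vert (fst (ends G e))) (Vert (snd (ends G e))) s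
       - jv (delete_edge G e) (Vert (fst (ends G e))) (Vert (snd (ends G e))) t)\<^sup>2
      / (len G e + res (delete_edge G e) (Vert (fst (ends G e))) (Vert (snd (ends G e))))"
proof -
  define X where "X = {s, t} \<inter> interior_pts (delete_edge G e)"
  have G': "metrized_graph (delete_edge G e)" by (rule metrized_graph_delete_edge[OF G e nb])
  then have sd: "subdivision (delete_edge G e) X" and st: "s \<in> nodes G X" "t \<in> nodes G X"
    using subdivision_through[OF G', of "{s, t}"] s t unfolding X_def by auto
  interpret edge_cut G e X by standard (fact G, fact e, fact sd)
  have pts: "P \<in> pts G'" "Q \<in> pts G'" using ends_nodes nodes_subset_pts[OF sd] by auto
  show ?thesis
    using res_cut[OF st] jv_sym[OF G' pts(2) s pts(1)] jv_sym[OF G' pts(2) t pts(1)]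
    unfolding jv_eq_voltage by simp
qed

theorem theorem3p1:
  fixes G :: "('v, 'e) mgraph" and e :: 'e and s t :: "('v, 'e) point"
  assumes "metrized_graph G"
    and "e \<in> edges G"
    and "\<not> is_bridge G e"
    and "s \<in> pts (delete_edge G e)" and "t \<in> pts (delete_edge G e)"
  shows "res G s t = res (delete_edge G e) s t
           - 1 / (len G e + res (delete_edge G e) (Vert (fst (ends G e))) (Vert (snd (ends G e))))
             * (jv (delete_edge G e) (Vert (fst (ends G e))) (Vert (snd (ends G e))) s
                - jv (delete_edge G e) (Vert (fst (ends G e))) (Vert (snd (ends G e))) t)\<^sup>2
       \<and> res G s t = res (delete_edge G e) s t
           - (len G e + res (delete_edge G e) (Vert (fst (ends G e))) (Vert (snd (ends G e)))) / (len G e)\<^sup>2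
             * (jv G (Vert (fst (ends G e))) (Vert (snd (ends G e))) s
                - jv G (Vert (fst (ends G e))) (Vert (snd (ends G e))) t)\<^sup>2
       \<and> res G s t \<le> res (delete_edge G e) s t
       \<and> (res (delete_edge G e) s t = res G s t \<longleftrightarrow>
            jv G (Vert (fst (ends G e))) (Vert (snd (ends G e))) s
            = jv G (Vert (fst (ends G e))) (Vert (snd (ends G e))) t)"
proof -
  let ?G' = "delete_edge G e" and ?P = "Vert (fst (ends G e))" and ?Q = "Vert (snd (ends G e))"
  let ?L = "len G e" and ?R = "res ?G' ?P ?Q" and ?A = "jv ?G' ?P ?Q s - jv ?G' ?P ?Q t"
  have sd: "subdivision ?G' {}"
    using metrized_graph_delete_edge[OF assms(1-3)] unfolding subdivision_def by simp
  interpret edge_cut G e "{}" by standard (fact assms(1), fact assms(2), fact sd)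
  have res: "res G s t = res ?G' s t - ?A\<^sup>2 / (?L + ?R)"
    by (rule res_delete_edge[OF assms])
  have jv: "jv G ?P ?Q s - jv G ?P ?Q t = ?L / (?L + ?R) * ?A"
    using jv_delete_edge[OF assms(1-4)] jv_delete_edge[OF assms(1-3,5)] by (simp add: right_diff_distrib)
  have "K / ?L\<^sup>2 * (?L / K * a)\<^sup>2 = a\<^sup>2 / K" if "0 < K" for K a
    using L_pos that by (simp add: field_simps power2_eq_square)
  then have rescale: "(?L + ?R) / ?L\<^sup>2 * (?L / (?L + ?R) * a)\<^sup>2 = a\<^sup>2 / (?L + ?R)" for a
    using LR_pos by blast
  have "res ?G' s t = res G s t \<longleftrightarrow> ?L / (?L + ?R) * ?A = 0"
    using res L_pos LR_pos by simp
  also have "\<dots> \<longleftrightarrow> jv G ?P ?Q s = jv G ?P ?Q t"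
    unfolding jv[symmetric] by simp
  finally show ?thesis
    unfolding jv rescale using res LR_pos by simp
qed

end
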